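(* Let $d\in\mathbb{Z}_{>0}$ and $X=\begin{pmatrix}z\sqrt\epsilon&u\sqrt\epsilon\\ v\sqrt\epsilon&z\sqrt\epsilon\end{pmatrix}\in\mathfrak{k}_{-d}$ with $z,u,v\in F$ such that $\nu(z),\nu(v)>-\lceil\frac d2\rceil$ and $\nu(u)=-d$. Let $X_u=\begin{pmatrix}0&u\sqrt\epsilon\\0&0\end{pmatrix}$. Then $\Psi_X=\Psi_{X_u}$ as characters of $\mathcal{J}_d$, and $T(X)\mathcal{J}_d=T(X_u)\mathcal{J}_d=Z\mathcal{U}\mathcal{J}_d$.
   Context: $F$ non-archimedean local field, $p\neq2$, uniformiser $\varpi$, valuation $\nu$; $E=F[\sqrt\epsilon]$ unramified quadratic. $G=\mathbb{U}(1,1)(F)$ (hermitian form $\mathrm{w}=\begin{pmatrix}0&1\\1&0\end{pmatrix}$) with center $Z$ (scalar matrices, $\cong E^1$), $\mathcal{K}=G\cap M_2(\mathcal{O}_E)$, $\mathcal{U}=\left\{\begin{pmatrix}1&\sqrt\epsilon b\\0&1\end{pmatrix}:b\in F\right\}\cap\mathcal{K}$. $\mathfrak{k}_{-d}$: elements of the Lie algebra with diagonal entries in $\mathfrak{p}_E^{-d}$ and off-diagonal entries in $\sqrt\epsilon\mathfrak{p}_F^{-d}$. $\mathcal{J}_d=\begin{pmatrix}1+\mathfrak{p}_E^{\lceil d/2\rceil}&\mathfrak{p}_E^{\lceil d/2\rceil}\\ \mathfrak{p}_E^{\lceil (d+1)/2\rceil}&1+\mathfrak{p}_E^{\lceil d/2\rceil}\end{pmatrix}\cap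 G$. $\psi$: additive character of $E$ trivial on $\mathfrak{p}_E$, nontrivial on $\mathcal{O}_E$; $\Psi_Y(k)=\psi(\mathrm{Tr}(Y(k-I)))$. $T(Y)$ denotes the centralizer of $Y$ in $\mathcal{K}$. *)

theory Defs
  imports Complex_Main
begin

text \<open>The valuation is nu :: 'a => int on nonzero elements; nu 0 = +infinity is encoded
  by the predicates below (val_ge nu x n means nu(x) >= n, with 0 satisfying all).\<close>

definition val_ge :: "('a::field \<Rightarrow> int) \<Rightarrow> 'a \<Rightarrow> int \<Rightarrow> bool" where
  "val_ge \<nu> x n \<longleftrightarrow> x = 0 \<or> \<nu> x \<ge> n"

definition val_gt :: "('a::field \<Rightarrow> int) \<Rightarrow> 'a \<Rightarrow> int \<Rightarrow> bool" where
  "val_gt \<nu> x n \<longleftrightarrow> x = 0 \<or> \<nu> x > n"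

definition nonarch_local_field :: "('a::field \<Rightarrow> int) \<Rightarrow> bool" where
  "nonarch_local_field \<nu> \<longleftrightarrow>
     (\<forall>x y. x \<noteq> 0 \<longrightarrow> y \<noteq> 0 \<longrightarrow> \<nu> (x * y) = \<nu> x + \<nu> y) \<and>
     (\<forall>x y. x \<noteq> 0 \<longrightarrow> y \<noteq> 0 \<longrightarrow> x + y \<noteq> 0 \<longrightarrow> \<nu> (x + y) \<ge> min (\<nu> x) (\<nu> y)) \<and>
     (\<exists>unif. unif \<noteq> 0 \<and> \<nu> unif = 1) \<and>
     (\<exists>S. finite S \<and> (\<forall>x. val_ge \<nu> x 0 \<longrightarrow> (\<exists>s\<in>S. val_ge \<nu> s 0 \<and> val_ge \<nu> (x - s) 1))) \<and>
     (\<forall>x :: nat \<Rightarrow> 'a. (\<forall>n. \<exists>N. \<forall>i\<ge>N. \<forall>j\<ge>N. val_ge \<nu> (x i - x j) n) \<longrightarrow>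
        (\<exists>L. \<forall>n. \<exists>N. \<forall>i\<ge>N. val_ge \<nu> (x i - L) n))"

definition residue_char_not_2 :: "('a::field \<Rightarrow> int) \<Rightarrow> bool" where
  "residue_char_not_2 \<nu> \<longleftrightarrow> (2::'a) \<noteq> 0 \<and> \<nu> 2 = 0"

section \<open>E = F[sqrt eps], elements a + b sqrt eps represented as pairs (a,b)\<close>

definition eadd :: "'a::field \<times> 'a \<Rightarrow> 'a \<times> 'a \<Rightarrow> 'a \<times> 'a" where
  "eadd x y = (fst x + fst y, snd x + snd y)"
definition esub :: "'a::field \<times> 'a \<Rightarrow> 'a \<times> 'a \<Rightarrow> 'a \<times> 'a" where
  "esub x y = (fst x - fst y, snd x - snd y)"
definition emul :: "'a::field \<Rightarrow> 'a \<times> 'a \<Rightarrow> 'a \<times> 'a \<Rightarrow> 'a \<times> 'a" where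
  "emul \<epsilon> x y = (fst x * fst y + \<epsilon> * snd x * snd y, fst x * snd y + snd x * fst y)"
definition econj :: "'a::field \<times> 'a \<Rightarrow> 'a \<times> 'a" where
  "econj x = (fst x, - snd x)"
definition e0 :: "'a::field \<times> 'a" where "e0 = (0, 0)"
definition e1 :: "'a::field \<times> 'a" where "e1 = (1, 0)"
definition esqrt :: "'a::field \<Rightarrow> 'a \<times> 'a" where "esqrt b = (0, b)"

text \<open>p_E^n (E/F unramified, so nu_E(a + b sqrt eps) = min(nu a, nu b)).\<close>
definition pE :: "('a::field \<Rightarrow> int) \<Rightarrow> int \<Rightarrow> ('a \<times> 'a) set" where
  "pE \<nu> n = {x. val_ge \<nu> (fst x) n \<and> val_ge \<nu> (snd x) n}"

datatype 'e m2 = M2 'e 'e 'e 'e  \<comment> \<open>M2 a b c d = (a b; c d)\<close>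

fun mmul :: "'a::field \<Rightarrow> ('a \<times> 'a) m2 \<Rightarrow> ('a \<times> 'a) m2 \<Rightarrow> ('a \<times> 'a) m2" where
  "mmul \<epsilon> (M2 a b c d) (M2 a' b' c' d') =
     M2 (eadd (emul \<epsilon> a a') (emul \<epsilon> b c')) (eadd (emul \<epsilon> a b') (emul \<epsilon> b d'))
        (eadd (emul \<epsilon> c a') (emul \<epsilon> d c')) (eadd (emul \<epsilon> c b') (emul \<epsilon> d d'))"
fun madd :: "('a::field \<times> 'a) m2 \<Rightarrow> ('a \<times> 'a) m2 \<Rightarrow> ('a \<times> 'a) m2" where
  "madd (M2 a b c d) (M2 a' b' c' d') = M2 (eadd a a') (eadd b b') (eadd c c') (eadd d d')"
fun msub :: "('a::field \<times> 'a) m2 \<Rightarrow> ('a \<times> 'a) m2 \<Rightarrow> ('a \<times> 'a) m2" where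
  "msub (M2 a b c d) (M2 a' b' c' d') = M2 (esub a a') (esub b b') (esub c c') (esub d d')"
fun mconjT :: "('a::field \<times> 'a) m2 \<Rightarrow> ('a \<times> 'a) m2" where
  "mconjT (M2 a b c d) = M2 (econj a) (econj c) (econj b) (econj d)"
fun mtrace :: "('a::field \<times> 'a) m2 \<Rightarrow> 'a \<times> 'a" where
  "mtrace (M2 a b c d) = eadd a d"

definition mI :: "('a::field \<times> 'a) m2" where "mI = M2 e1 e0 e0 e1"
definition mZero :: "('a::field \<times> 'a) m2" where "mZero = M2 e0 e0 e0 e0"
definition mw :: "('a::field \<times> 'a) m2" where "mw = M2 e0 e1 e1 e0"

definition UG :: "'a::field \<Rightarrow> ('a \<times> 'a) m2 set" where
  "UG \<epsilon> = {g. mmul \<epsilon> (mmul \<epsilon> (mconjT g) mw) g = mw}"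

definition ULie :: "'a::field \<Rightarrow> ('a \<times> 'a) m2 set" where
  "ULie \<epsilon> = {Y. madd (mmul \<epsilon> (mconjT Y) mw) (mmul \<epsilon> mw Y) = mZero}"

definition center :: "'a::field \<Rightarrow> ('a \<times> 'a) m2 set" where
  "center \<epsilon> = UG \<epsilon> \<inter> {M2 l e0 e0 l | l. True}"

definition Kmax :: "('a::field \<Rightarrow> int) \<Rightarrow> 'a \<Rightarrow> ('a \<times> 'a) m2 set" where
  "Kmax \<nu> \<epsilon> = UG \<epsilon> \<inter> {M2 a b c d | a b c d.
      a \<in> pE \<nu> 0 \<and> b \<in> pE \<nu> 0 \<and> c \<in> pE \<nu> 0 \<and> d \<in> pE \<nu> 0}"

definition Ugrp :: "('a::field \<Rightarrow> int) \<Rightarrow> 'a \<Rightarrow> ('a \<times> 'a) m2 set" where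
  "Ugrp \<nu> \<epsilon> = {M2 e1 (esqrt b) e0 e1 | b. True} \<inter> Kmax \<nu> \<epsilon>"

definition kLie :: "('a::field \<Rightarrow> int) \<Rightarrow> 'a \<Rightarrow> int \<Rightarrow> ('a \<times> 'a) m2 set" where
  "kLie \<nu> \<epsilon> d = ULie \<epsilon> \<inter> {M2 a (esqrt b) (esqrt c) a' | a b c a'.
      a \<in> pE \<nu> (-d) \<and> a' \<in> pE \<nu> (-d) \<and> val_ge \<nu> b (-d) \<and> val_ge \<nu> c (-d)}"

definition Jgrp :: "('a::field \<Rightarrow> int) \<Rightarrow> 'a \<Rightarrow> int \<Rightarrow> ('a \<times> 'a) m2 set" where
  "Jgrp \<nu> \<epsilon> d = UG \<epsilon> \<inter> {M2 a b c a' | a b c a'.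
      esub a e1 \<in> pE \<nu> \<lceil>real_of_int d / 2\<rceil> \<and> esub a' e1 \<in> pE \<nu> \<lceil>real_of_int d / 2\<rceil> \<and>
      b \<in> pE \<nu> \<lceil>real_of_int d / 2\<rceil> \<and> c \<in> pE \<nu> \<lceil>real_of_int (d + 1) / 2\<rceil>}"

definition centralizerK :: "('a::field \<Rightarrow> int) \<Rightarrow> 'a \<Rightarrow> ('a \<times> 'a) m2 \<Rightarrow> ('a \<times> 'a) m2 set" where
  "centralizerK \<nu> \<epsilon> Y = {k \<in> Kmax \<nu> \<epsilon>. mmul \<epsilon> k Y = mmul \<epsilon> Y k}"

definition setmul :: "'a::field \<Rightarrow> ('a \<times> 'a) m2 set \<Rightarrow> ('a \<times> 'a) m2 set \<Rightarrow> ('a \<times> 'a) m2 set" where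
  "setmul \<epsilon> A B = {mmul \<epsilon> a b | a b. a \<in> A \<and> b \<in> B}"

definition add_char_cond :: "('a::field \<Rightarrow> int) \<Rightarrow> ('a \<times> 'a \<Rightarrow> complex) \<Rightarrow> bool" where
  "add_char_cond \<nu> \<psi> \<longleftrightarrow>
     (\<forall>x y. \<psi> (eadd x y) = \<psi> x * \<psi> y) \<and> (\<forall>x. cmod (\<psi> x) = 1) \<and>
     (\<forall>x \<in> pE \<nu> 1. \<psi> x = 1) \<and> (\<exists>x \<in> pE \<nu> 0. \<psi> x \<noteq> 1)"

definition PsiC :: "('a \<times> 'a \<Rightarrow> complex) \<Rightarrow> 'a::field \<Rightarrow> ('a \<times> 'a) m2 \<Rightarrow> ('a \<times> 'a) m2 \<Rightarrow> complex" where
  "PsiC \<psi> \<epsilon> Y k = \<psi> (mtrace (mmul \<epsilon> Y (msub k mI)))"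

end

theory Submission
  imports Defs
begin

(*
  Against k - 1 for k in J_d, the entries z and v of X contribute to the trace only modulo p_E,
  where psi is trivial; hence Psi_X = Psi_{X_u}.

  An element of K commuting with X has the shape [[a, b], [r b, a]] with r = v/u, and
  nu(r) >= ceil((d+1)/2) because nu(v) > -ceil(d/2) and nu(u) = -d.  Its hermitian condition
  makes the norm of a congruent to 1 modulo p^ceil((d+1)/2), so (p odd, Hensel) that norm is s^2
  with s close to 1.
  Dividing a by s writes the element as a norm-one scalar times an upper unipotent element of U
  times an element of J_d; conversely every element of Z U is, modulo J_d, a norm-one scalar times
  [[s, b], [r b, s]] with s^2 = 1 + eps r b^2, which lies in T(X).  Since J_d is a group, the two
  inclusions give T(X) J_d = Z U J_d.  For X_u (r = 0, s = 1) the same factorisation shows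
  T(X_u) = Z U.  Scalars of norm one lie in K because eps is a non-square unit.
*)

section \<open>Valuations\<close>

lemma val_ge_0 [simp]: "val_ge \<nu> 0 n"
  by (simp add: val_ge_def)

lemma val_gt_iff_val_ge: "val_gt \<nu> x n \<longleftrightarrow> val_ge \<nu> x (n + 1)"
  by (auto simp: val_gt_def val_ge_def)

lemma val_ge_mono: "val_ge \<nu> x n \<Longrightarrow> m \<le> n \<Longrightarrow> val_ge \<nu> x m"
  by (auto simp: val_ge_def)

lemma val_ge_all_imp_zero: "(\<And>n. 0 \<le> n \<Longrightarrow> val_ge \<nu> x n) \<Longrightarrow> x = 0"
  unfolding val_ge_def by (metis max.cobounded1 max.cobounded2 not_one_le_zero add_le_same_cancel1 order.trans)

locale local_field =
  fixes \<nu> :: "'a::field \<Rightarrow> int"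
  assumes local_field: "nonarch_local_field \<nu>"
begin

lemma val_mult: "x \<noteq> 0 \<Longrightarrow> y \<noteq> 0 \<Longrightarrow> \<nu> (x * y) = \<nu> x + \<nu> y"
  using local_field unfolding nonarch_local_field_def by blast

lemma val_add: "x \<noteq> 0 \<Longrightarrow> y \<noteq> 0 \<Longrightarrow> x + y \<noteq> 0 \<Longrightarrow> min (\<nu> x) (\<nu> y) \<le> \<nu> (x + y)"
  using local_field unfolding nonarch_local_field_def by blast

lemma cauchy_has_limit:
  fixes x :: "nat \<Rightarrow> 'a"
  assumes "\<And>n. \<exists>N. \<forall>i\<ge>N. \<forall>j\<ge>N. val_ge \<nu> (x i - x j) n"
  shows "\<exists>L. \<forall>n. \<exists>N. \<forall>i\<ge>N. val_ge \<nu> (x i - L) n"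
proof -
  have "\<forall>x :: nat \<Rightarrow> 'a. (\<forall>n. \<exists>N. \<forall>i\<ge>N. \<forall>j\<ge>N. val_ge \<nu> (x i - x j) n) \<longrightarrow>
      (\<exists>L. \<forall>n. \<exists>N. \<forall>i\<ge>N. val_ge \<nu> (x i - L) n)"
    using local_field unfolding nonarch_local_field_def by (elim conjE)
  moreover have "\<forall>n. \<exists>N. \<forall>i\<ge>N. \<forall>j\<ge>N. val_ge \<nu> (x i - x j) n"
    using assms by blast
  ultimately show ?thesis
    by blast
qed

lemma val_one [simp]: "\<nu> 1 = 0"
  using val_mult[of 1 1] by simp

lemma val_minus [simp]: "\<nu> (- x) = \<nu> x"
proof (cases "x = 0")
  case False
  have "\<nu> (-1) + \<nu> (-1) = 0"
    using val_mult[of "-1" "-1"] by simp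
  then show ?thesis
    using val_mult[of "-1" x] False by simp
qed simp

lemma val_divide: "x \<noteq> 0 \<Longrightarrow> y \<noteq> 0 \<Longrightarrow> \<nu> (x / y) = \<nu> x - \<nu> y"
  using val_mult[of "x / y" y] by simp

lemma val_add_eq_min:
  assumes "x \<noteq> 0" "y \<noteq> 0" "\<nu> x \<noteq> \<nu> y"
  shows "x + y \<noteq> 0" and "\<nu> (x + y) = min (\<nu> x) (\<nu> y)"
proof -
  show sum_nz: "x + y \<noteq> 0"
    using assms by (metis add_eq_0_iff val_minus)
  have "min (\<nu> (x + y)) (\<nu> (- y)) \<le> \<nu> x"
    using val_add[OF sum_nz, of "- y"] assms by simp
  moreover have "min (\<nu> (x + y)) (\<nu> (- x)) \<le> \<nu> ((x + y) + - x)"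
    using val_add[OF sum_nz, of "- x"] assms by simp
  then have "min (\<nu> (x + y)) (\<nu> (- x)) \<le> \<nu> y"
    by simp
  ultimately show "\<nu> (x + y) = min (\<nu> x) (\<nu> y)"
    using val_add[OF assms(1,2) sum_nz] assms(3) by auto
qed

lemma val_ge_0_if_sum_one:
  assumes "x + y = 1" "x = 0 \<or> y = 0 \<or> \<nu> x \<noteq> \<nu> y"
  shows "val_ge \<nu> x 0 \<and> val_ge \<nu> y 0"
proof -
  consider "x = 0" | "y = 0" | "x \<noteq> 0" "y \<noteq> 0" "\<nu> x \<noteq> \<nu> y"
    using assms(2) by blast
  then show ?thesis
  proof cases
    case 3
    then have "\<nu> (x + y) = min (\<nu> x) (\<nu> y)"
      by (rule val_add_eq_min)
    then show ?thesis
      using assms(1) by (auto simp: val_ge_def min_def split: if_splits)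
  qed (use assms(1) in \<open>auto simp: val_ge_def\<close>)
qed

lemma val_eq_0_if_near_one:
  assumes "val_ge \<nu> (s - 1) 1"
  shows "s \<noteq> 0" and "\<nu> s = 0"
proof -
  show "s \<noteq> 0"
    using assms by (auto simp: val_ge_def)
  show "\<nu> s = 0"
  proof (cases "s = 1")
    case False
    then have "1 + (s - 1) \<noteq> 0 \<and> \<nu> (1 + (s - 1)) = min 0 (\<nu> (s - 1))"
      using val_add_eq_min[of 1 "s - 1"] assms by (auto simp: val_ge_def)
    then show ?thesis
      using assms False by (simp add: val_ge_def)
  qed simp
qed

lemma val_ge_uminus [simp]: "val_ge \<nu> (- x) n \<longleftrightarrow> val_ge \<nu> x n"
  by (simp add: val_ge_def)

lemma val_ge_one [simp]: "val_ge \<nu> 1 n \<longleftrightarrow> n \<le> 0"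
  by (simp add: val_ge_def)

lemma val_ge_add [intro]: "val_ge \<nu> x n \<Longrightarrow> val_ge \<nu> y n \<Longrightarrow> val_ge \<nu> (x + y) n"
  unfolding val_ge_def by (metis add.right_neutral add_0 min.bounded_iff val_add order.trans)

lemma val_ge_diff [intro]: "val_ge \<nu> x n \<Longrightarrow> val_ge \<nu> y n \<Longrightarrow> val_ge \<nu> (x - y) n"
  using val_ge_add[of x n "- y"] by simp

lemma val_ge_mult: "val_ge \<nu> x m \<Longrightarrow> val_ge \<nu> y n \<Longrightarrow> k \<le> m + n \<Longrightarrow> val_ge \<nu> (x * y) k"
  unfolding val_ge_def using val_mult[of x y] by (cases "x = 0"; cases "y = 0") auto

lemma val_ge_mult_integral_left [intro]: "val_ge \<nu> x 0 \<Longrightarrow> val_ge \<nu> y n \<Longrightarrow> val_ge \<nu> (x * y) n"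
  using val_ge_mult[of x 0 y n n] by simp

lemma val_ge_mult_integral_right [intro]: "val_ge \<nu> x n \<Longrightarrow> val_ge \<nu> y 0 \<Longrightarrow> val_ge \<nu> (x * y) n"
  using val_ge_mult[of x n y 0 n] by simp

lemma val_ge_divide: "val_ge \<nu> x n \<Longrightarrow> y \<noteq> 0 \<Longrightarrow> val_ge \<nu> (x / y) (n - \<nu> y)"
  unfolding val_ge_def using val_divide[of x y] by (cases "x = 0") auto

lemma val_ge_0_if_near_one:
  assumes "val_ge \<nu> (x - 1) n" "0 \<le> n"
  shows "val_ge \<nu> x 0"
proof -
  have "val_ge \<nu> ((x - 1) + 1) 0"
    using assms val_ge_mono by (intro val_ge_add) auto
  then show ?thesis
    by simp
qed

lemma val_ge_square_diff:
  assumes "val_ge \<nu> s 0" "val_ge \<nu> (L - s) n" "0 \<le> n"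
  shows "val_ge \<nu> (L * L - s * s) n"
proof -
  have "val_ge \<nu> ((L - s) + (s + s)) 0"
    using assms val_ge_mono[of \<nu> "L - s" n 0] by blast
  then have "val_ge \<nu> ((L - s) * ((L - s) + (s + s))) n"
    using assms(2) by blast
  moreover have "(L - s) * ((L - s) + (s + s)) = L * L - s * s"
    by (simp add: algebra_simps)
  ultimately show ?thesis
    by simp
qed

end

section \<open>Square roots of elements close to 1\<close>

locale local_field_odd = local_field +
  assumes residue_char_odd: "residue_char_not_2 \<nu>"
begin

lemma two_nonzero [simp]: "(2::'a) \<noteq> 0"
  using residue_char_odd by (simp add: residue_char_not_2_def)

lemma val_two [simp]: "\<nu> 2 = 0"
  using residue_char_odd by (simp add: residue_char_not_2_def)

lemma val_ge_half: "val_ge \<nu> x n \<Longrightarrow> val_ge \<nu> (x / 2) n"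
  using val_ge_divide[of x n 2] by simp

text \<open>A simplified Newton iteration for a square root of c, started at 1: each step gains
  one order of precision because 2 is a unit.\<close>

lemma newton_step_sqrt:
  assumes "1 \<le> n" "n \<le> k" "val_ge \<nu> (t - 1) n" "val_ge \<nu> (t * t - c) k"
  defines "t' \<equiv> t - (t * t - c) / 2"
  shows "val_ge \<nu> (t' - 1) n" and "val_ge \<nu> (t' * t' - c) (k + 1)"
proof -
  define e where "e = t * t - c"
  define h where "h = e / 2"
  have h: "val_ge \<nu> h k"
    using assms(4) val_ge_half by (simp add: h_def e_def)
  have "val_ge \<nu> ((t - 1) - h) n"
    using assms(3) val_ge_mono[OF h assms(2)] by (rule val_ge_diff)
  moreover have "(t - 1) - h = t' - 1"
    by (simp add: t'_def h_def e_def)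
  ultimately show "val_ge \<nu> (t' - 1) n"
    by metis
  have "val_ge \<nu> (1 - t) 1"
    using val_ge_mono[OF assms(3,1)] val_ge_uminus[of "t - 1"] by simp
  then have "val_ge \<nu> (e * (1 - t) + h * h) (k + 1)"
    using assms(1,2,4) val_ge_mult[OF h h] val_ge_mult[of e k]
    by (intro val_ge_add) (auto simp: e_def)
  moreover have "t' * t' - c = e * (1 - t) + h * h"
  proof -
    have t'_eq: "t' = t - h"
      by (simp add: t'_def h_def e_def)
    have "t' * t' - c = e - 2 * h * t + h * h"
      unfolding t'_eq e_def by (simp add: algebra_simps)
    also have "\<dots> = e * (1 - t) + h * h"
      using h_def by (simp add: algebra_simps)
    finally show ?thesis .
  qed
  ultimately show "val_ge \<nu> (t' * t' - c) (k + 1)"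
    by simp
qed

lemma has_limit_if_steps_small:
  fixes s :: "nat \<Rightarrow> 'a"
  assumes small_steps: "\<And>k. val_ge \<nu> (s (Suc k) - s k) (n + int k)"
  shows "\<exists>L. \<forall>M. \<exists>N. \<forall>i\<ge>N. val_ge \<nu> (s i - L) M"
proof (rule cauchy_has_limit)
  have tail: "val_ge \<nu> (s i - s N) (n + int N)" if "N \<le> i" for i N
    using that
  proof (induction i rule: dec_induct)
    case (step i)
    have "s (Suc i) - s N = (s (Suc i) - s i) + (s i - s N)"
      by simp
    moreover have "val_ge \<nu> (s (Suc i) - s i) (n + int N)"
      using val_ge_mono[OF small_steps[of i]] step.hyps by simp
    ultimately show ?case
      using val_ge_add[OF _ step.IH] by metis
  qed simp
  fix M
  define N where "N = nat (M - n)"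
  show "\<exists>N. \<forall>i\<ge>N. \<forall>j\<ge>N. val_ge \<nu> (s i - s j) M"
  proof (rule exI[of _ N], intro allI impI)
    fix i j
    assume "N \<le> i" "N \<le> j"
    moreover have "M \<le> n + int N"
      by (simp add: N_def)
    ultimately have "val_ge \<nu> (s i - s N) M" "val_ge \<nu> (s j - s N) M"
      using tail val_ge_mono by blast+
    then have "val_ge \<nu> ((s i - s N) - (s j - s N)) M"
      by (rule val_ge_diff)
    then show "val_ge \<nu> (s i - s j) M"
      by simp
  qed
qed

lemma newton_sqrt_iterates:
  assumes "1 \<le> n" "val_ge \<nu> (c - 1) n"
  defines "s \<equiv> \<lambda>k. ((\<lambda>t. t - (t * t - c) / 2) ^^ k) 1"
  shows "val_ge \<nu> (s k - 1) n" and "val_ge \<nu> (s k * s k - c) (n + int k)"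
    and "val_ge \<nu> (s (Suc k) - s k) (n + int k)"
proof -
  have approx: "val_ge \<nu> (s k - 1) n \<and> val_ge \<nu> (s k * s k - c) (n + int k)" for k
  proof (induction k)
    case 0
    show ?case
      using assms(2) val_ge_uminus[of "c - 1"] by (simp add: s_def)
  next
    case (Suc k)
    then show ?case
      using newton_step_sqrt[OF assms(1), of "n + int k" "s k" c] by (simp add: s_def ac_simps)
  qed
  then show "val_ge \<nu> (s k - 1) n" "val_ge \<nu> (s k * s k - c) (n + int k)"
    by simp_all
  show "val_ge \<nu> (s (Suc k) - s k) (n + int k)"
    using approx[of k] val_ge_half val_ge_uminus by (simp add: s_def)
qed

lemma sqrt_near_one:
  assumes "1 \<le> n" "val_ge \<nu> (c - 1) n"
  obtains r where "r * r = c" "val_ge \<nu> (r - 1) n"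
proof -
  define s where "s k = ((\<lambda>t. t - (t * t - c) / 2) ^^ k) 1" for k
  note iterates = newton_sqrt_iterates[OF assms, folded s_def]
  obtain L where L: "\<forall>M. \<exists>N. \<forall>i\<ge>N. val_ge \<nu> (s i - L) M"
    using has_limit_if_steps_small iterates(3) by blast
  have close: "\<exists>i. val_ge \<nu> (L - s i) M \<and> M \<le> n + int i" for M
  proof -
    obtain N where N: "\<forall>i\<ge>N. val_ge \<nu> (s i - L) M"
      using L by blast
    have "val_ge \<nu> (L - s i) M" if "N \<le> i" for i
      using that N val_ge_uminus[of "s i - L"] by simp
    then show ?thesis
      using assms(1) by (intro exI[of _ "max N (nat M)"]) simp
  qed
  have "val_ge \<nu> (L * L - c) M" if M: "0 \<le> M" for M
  proof -
    obtain i where i: "val_ge \<nu> (L - s i) M" "M \<le> n + int i"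
      using close by blast
    have "val_ge \<nu> (s i) 0"
      using val_ge_0_if_near_one[OF iterates(1)] assms(1) by simp
    then have "val_ge \<nu> (L * L - s i * s i) M"
      using i(1) M by (rule val_ge_square_diff)
    moreover have "val_ge \<nu> (s i * s i - c) M"
      using iterates(2) i(2) by (rule val_ge_mono)
    ultimately have "val_ge \<nu> ((L * L - s i * s i) + (s i * s i - c)) M"
      by (rule val_ge_add)
    then show ?thesis
      by simp
  qed
  then have "L * L = c"
    using val_ge_all_imp_zero[of \<nu> "L * L - c"] by simp
  moreover obtain i where "val_ge \<nu> (L - s i) n"
    using close by blast
  then have "val_ge \<nu> ((L - s i) + (s i - 1)) n"
    using iterates(1) by blast
  ultimately show ?thesis
    using that by simp
qed

end

section \<open>Elements of norm one in E\<close>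

locale unramified_quadratic = local_field_odd +
  fixes \<epsilon> :: "'a::field"
  assumes eps_nonzero: "\<epsilon> \<noteq> 0"
    and val_eps: "\<nu> \<epsilon> = 0"
    and eps_nonsquare: "\<not> (\<exists>y. y * y = \<epsilon>)"
begin

lemma val_ge_eps [simp]: "val_ge \<nu> \<epsilon> 0"
  by (simp add: val_ge_def val_eps)

lemma norm_one_equal_val_nonneg:
  assumes norm: "x * x - \<epsilon> * y * y = 1" and "x \<noteq> 0" "y \<noteq> 0" "\<nu> x = \<nu> y"
  shows "0 \<le> \<nu> x"
proof (rule ccontr)
  assume "\<not> 0 \<le> \<nu> x"
  moreover have "\<nu> (1 / (x * x)) = - (\<nu> x + \<nu> x)"
    using val_divide[of 1 "x * x"] val_mult[of x x] assms(2) by simp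
  ultimately have "val_ge \<nu> ((1 - 1 / (x * x)) - 1) 1"
    by (simp add: val_ge_def)
  then obtain r where r: "r * r = 1 - 1 / (x * x)"
    by (rule sqrt_near_one[OF order.refl])
  have "(x * r / y) * (x * r / y) = (x * x - 1) / (y * y)"
    using r assms(2) by (simp add: field_simps)
  also have "\<dots> = \<epsilon>"
    using norm assms(3) by (simp add: field_simps)
  finally show False
    using eps_nonsquare by blast
qed

lemma norm_one_integral:
  assumes norm: "x * x - \<epsilon> * y * y = 1"
  shows "val_ge \<nu> x 0" and "val_ge \<nu> y 0"
proof -
  have val_square: "\<nu> (w * w) = \<nu> w + \<nu> w" if "w \<noteq> 0" for w
    using val_mult that by simp
  have val_eps_square: "\<nu> (\<epsilon> * y * y) = \<nu> y + \<nu> y" if "y \<noteq> 0"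
    using val_mult[of \<epsilon> y] val_mult[of "\<epsilon> * y" y] that eps_nonzero val_eps by simp
  have x_integral: "val_ge \<nu> x 0" if "val_ge \<nu> (x * x) 0"
    using that val_square[of x] by (cases "x = 0") (simp_all add: val_ge_def)
  have y_integral: "val_ge \<nu> y 0" if "val_ge \<nu> (- (\<epsilon> * y * y)) 0"
    using that val_eps_square eps_nonzero by (cases "y = 0") (simp_all add: val_ge_def)
  consider "x \<noteq> 0" "y \<noteq> 0" "\<nu> x = \<nu> y"
    | "x * x = 0 \<or> - (\<epsilon> * y * y) = 0 \<or> \<nu> (x * x) \<noteq> \<nu> (- (\<epsilon> * y * y))"
    using val_square[of x] val_eps_square eps_nonzero by fastforce
  then have "val_ge \<nu> x 0 \<and> val_ge \<nu> y 0"
  proof cases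
    case 1
    then show ?thesis
      using norm_one_equal_val_nonneg[OF norm] by (simp add: val_ge_def)
  next
    case 2
    moreover have "x * x + - (\<epsilon> * y * y) = 1"
      using norm by simp
    ultimately show ?thesis
      using val_ge_0_if_sum_one x_integral y_integral by blast
  qed
  then show "val_ge \<nu> x 0" "val_ge \<nu> y 0"
    by simp_all
qed

end

section \<open>The unitary group U(1,1) in coordinates\<close>

lemmas E_defs = eadd_def esub_def emul_def econj_def e0_def e1_def esqrt_def

abbreviation scalar_m2 :: "'a::field \<times> 'a \<Rightarrow> ('a \<times> 'a) m2"
  where "scalar_m2 l \<equiv> M2 l e0 e0 l"

abbreviation upper_unip :: "'a::field \<Rightarrow> ('a \<times> 'a) m2"
  where "upper_unip b \<equiv> M2 e1 (esqrt b) e0 e1"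

lemma mmul_assoc: "mmul \<epsilon> (mmul \<epsilon> A B) C = mmul \<epsilon> A (mmul \<epsilon> B C)"
  by (cases A; cases B; cases C) (simp add: E_defs algebra_simps)

lemma mconjT_mmul: "mconjT (mmul \<epsilon> A B) = mmul \<epsilon> (mconjT B) (mconjT A)"
  by (cases A; cases B) (simp add: E_defs algebra_simps)

lemma UG_mult: "A \<in> UG \<epsilon> \<Longrightarrow> B \<in> UG \<epsilon> \<Longrightarrow> mmul \<epsilon> A B \<in> UG \<epsilon>"
  unfolding UG_def by (simp add: mconjT_mmul mmul_assoc[symmetric]) (metis mmul_assoc)

lemma UG_iff:
  fixes \<epsilon> :: "'a::field"
  assumes "(2::'a) \<noteq> 0"
  shows "M2 (a1, a2) (b1, b2) (c1, c2) (d1, d2) \<in> UG \<epsilon> \<longleftrightarrow>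
    a1 * c1 = \<epsilon> * a2 * c2 \<and> b1 * d1 = \<epsilon> * b2 * d2 \<and>
    c1 * b1 - \<epsilon> * c2 * b2 + a1 * d1 - \<epsilon> * a2 * d2 = 1 \<and>
    c1 * b2 - c2 * b1 + a1 * d2 - a2 * d1 = 0"
proof -
  have "M2 (a1, a2) (b1, b2) (c1, c2) (d1, d2) \<in> UG \<epsilon> \<longleftrightarrow>
    2 * (a1 * c1 - \<epsilon> * a2 * c2) = 0 \<and> 2 * (b1 * d1 - \<epsilon> * b2 * d2) = 0 \<and>
    c1 * b1 - \<epsilon> * c2 * b2 + a1 * d1 - \<epsilon> * a2 * d2 = 1 \<and>
    c1 * b2 - c2 * b1 + a1 * d2 - a2 * d1 = 0"
    unfolding UG_def mw_def by (simp add: E_defs algebra_simps) (auto simp: algebra_simps)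
  then show ?thesis
    using assms by simp
qed

lemma center_iff:
  fixes \<epsilon> :: "'a::field"
  assumes "(2::'a) \<noteq> 0"
  shows "g \<in> center \<epsilon> \<longleftrightarrow> (\<exists>x y. g = scalar_m2 (x, y) \<and> x * x - \<epsilon> * y * y = 1)"
  unfolding center_def using UG_iff[OF assms] by (auto simp: E_defs)

lemma mmul_commute_iff:
  fixes \<epsilon> :: "'a::field"
  assumes "\<epsilon> \<noteq> 0" "u \<noteq> 0"
  shows "mmul \<epsilon> (M2 (a1, a2) (b1, b2) (c1, c2) (d1, d2)) (M2 (esqrt z) (esqrt u) (esqrt v) (esqrt z))
       = mmul \<epsilon> (M2 (esqrt z) (esqrt u) (esqrt v) (esqrt z)) (M2 (a1, a2) (b1, b2) (c1, c2) (d1, d2))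
     \<longleftrightarrow> d1 = a1 \<and> d2 = a2 \<and> c1 = v / u * b1 \<and> c2 = v / u * b2"
  using assms by (auto simp: E_defs field_simps)

lemma setmul_assoc: "setmul \<epsilon> (setmul \<epsilon> A B) C = setmul \<epsilon> A (setmul \<epsilon> B C)"
proof (intro equalityI subsetI)
  fix x
  assume "x \<in> setmul \<epsilon> (setmul \<epsilon> A B) C"
  then obtain a b c where "x = mmul \<epsilon> (mmul \<epsilon> a b) c" "a \<in> A" "b \<in> B" "c \<in> C"
    by (auto simp: setmul_def)
  then show "x \<in> setmul \<epsilon> A (setmul \<epsilon> B C)"
    by (auto simp: setmul_def mmul_assoc)
next
  fix x
  assume "x \<in> setmul \<epsilon> A (setmul \<epsilon> B C)"
  then obtain a b c where "x = mmul \<epsilon> a (mmul \<epsilon> b c)" "a \<in> A" "b \<in> B" "c \<in> C"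
    by (auto simp: setmul_def)
  then show "x \<in> setmul \<epsilon> (setmul \<epsilon> A B) C"
    by (auto simp: setmul_def mmul_assoc[symmetric])
qed

lemma setmul_eq_if_covered:
  assumes closed: "\<And>j j'. j \<in> J \<Longrightarrow> j' \<in> J \<Longrightarrow> mmul \<epsilon> j j' \<in> J"
    and "A \<subseteq> setmul \<epsilon> B J" and "B \<subseteq> setmul \<epsilon> A J"
  shows "setmul \<epsilon> A J = setmul \<epsilon> B J"
proof -
  have absorb: "setmul \<epsilon> (setmul \<epsilon> C J) J \<subseteq> setmul \<epsilon> C J" for C
    unfolding setmul_assoc by (auto simp: setmul_def intro: closed)
  have mono: "setmul \<epsilon> C J \<subseteq> setmul \<epsilon> D J" if "C \<subseteq> D" for C D
    using that by (auto simp: setmul_def)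
  show ?thesis
    using absorb mono assms(2,3) by (meson subset_antisym order.trans)
qed

text \<open>The last factor lies in J_d when s is close to 1 and r is small.\<close>

lemma centralizer_element_factor:
  fixes \<epsilon> :: "'a::field"
  assumes "s \<noteq> 0" "s * s = a1 * a1 - \<epsilon> * a2 * a2" "b1 * a1 = \<epsilon> * b2 * a2"
  defines "\<beta> \<equiv> (a1 * b2 - a2 * b1) / s"
  shows "(a1 / s) * (a1 / s) - \<epsilon> * (a2 / s) * (a2 / s) = 1"
    and "b1 * b1 - \<epsilon> * b2 * b2 = - \<epsilon> * \<beta> * \<beta>"
    and "M2 (a1, a2) (b1, b2) (r * b1, r * b2) (a1, a2)
       = mmul \<epsilon> (mmul \<epsilon> (scalar_m2 (a1 / s, a2 / s)) (upper_unip \<beta>))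
           (M2 (s - \<epsilon> * \<beta> * (r * \<beta>), 0) (0, \<beta> - \<beta> * s) (0, r * \<beta>) (s, 0))"
      (is "_ = ?factored")
proof -
  have "\<epsilon> * a2 * (a1 * b2 - a2 * b1) = (s * s) * b1"
    and "a1 * (a1 * b2 - a2 * b1) = (s * s) * b2"
    unfolding assms(2) using assms(3) by algebra+
  moreover have "\<epsilon> * (a2 / s) * \<beta> = \<epsilon> * a2 * (a1 * b2 - a2 * b1) / (s * s)"
    and "(a1 / s) * \<beta> = a1 * (a1 * b2 - a2 * b1) / (s * s)"
    unfolding \<beta>_def by simp_all
  ultimately have b: "b1 = \<epsilon> * (a2 / s) * \<beta>" "b2 = (a1 / s) * \<beta>"
    using assms(1) by simp_all
  show norm: "(a1 / s) * (a1 / s) - \<epsilon> * (a2 / s) * (a2 / s) = 1"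
    using assms(1,2) by (simp add: field_simps)
  then show "b1 * b1 - \<epsilon> * b2 * b2 = - \<epsilon> * \<beta> * \<beta>"
    unfolding b by algebra
  have "M2 (a1, a2) (b1, b2) (r * b1, r * b2) (a1, a2)
      = M2 (a1, a2) (\<epsilon> * (a2 / s) * \<beta>, (a1 / s) * \<beta>) (r * (\<epsilon> * (a2 / s) * \<beta>), r * ((a1 / s) * \<beta>)) (a1, a2)"
    using b by simp
  also have "\<dots> = ?factored"
    using assms(1) by (simp add: E_defs field_simps)
  finally show "M2 (a1, a2) (b1, b2) (r * b1, r * b2) (a1, a2) = ?factored" .
qed

context unramified_quadratic
begin

lemma Kmax_iff: "M2 (a1, a2) (b1, b2) (c1, c2) (d1, d2) \<in> Kmax \<nu> \<epsilon> \<longleftrightarrow>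
   M2 (a1, a2) (b1, b2) (c1, c2) (d1, d2) \<in> UG \<epsilon> \<and>
   val_ge \<nu> a1 0 \<and> val_ge \<nu> a2 0 \<and> val_ge \<nu> b1 0 \<and> val_ge \<nu> b2 0 \<and>
   val_ge \<nu> c1 0 \<and> val_ge \<nu> c2 0 \<and> val_ge \<nu> d1 0 \<and> val_ge \<nu> d2 0"
  unfolding Kmax_def by (auto simp: pE_def)

lemma Kmax_mult:
  assumes "A \<in> Kmax \<nu> \<epsilon>" "B \<in> Kmax \<nu> \<epsilon>"
  shows "mmul \<epsilon> A B \<in> Kmax \<nu> \<epsilon>"
proof -
  obtain a1 a2 b1 b2 c1 c2 d1 d2 where A: "A = M2 (a1, a2) (b1, b2) (c1, c2) (d1, d2)"
    by (metis m2.exhaust prod.exhaust)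
  obtain a1' a2' b1' b2' c1' c2' d1' d2' where B: "B = M2 (a1', a2') (b1', b2') (c1', c2') (d1', d2')"
    by (metis m2.exhaust prod.exhaust)
  have "mmul \<epsilon> A B \<in> UG \<epsilon>"
    using assms UG_mult by (auto simp: Kmax_def)
  then show ?thesis
    using assms unfolding A B by (simp add: E_defs Kmax_iff) (blast intro: val_ge_eps)
qed

lemma center_subset_Kmax: "center \<epsilon> \<subseteq> Kmax \<nu> \<epsilon>"
proof
  fix g
  assume g: "g \<in> center \<epsilon>"
  then obtain x y where "g = scalar_m2 (x, y)" "x * x - \<epsilon> * y * y = 1"
    using center_iff[OF two_nonzero] by blast
  then show "g \<in> Kmax \<nu> \<epsilon>"
    using g norm_one_integral by (auto simp: Kmax_iff E_defs center_def)
qed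

lemma Ugrp_iff: "n \<in> Ugrp \<nu> \<epsilon> \<longleftrightarrow> (\<exists>b. n = upper_unip b \<and> val_ge \<nu> b 0)"
  unfolding Ugrp_def by (auto simp: E_defs Kmax_iff UG_iff[OF two_nonzero])

lemma centralizerK_elementE:
  assumes "u \<noteq> 0" "t \<in> centralizerK \<nu> \<epsilon> (M2 (esqrt z) (esqrt u) (esqrt v) (esqrt z))"
  obtains a1 a2 b1 b2 where "t = M2 (a1, a2) (b1, b2) (v / u * b1, v / u * b2) (a1, a2)"
    and "b1 * a1 = \<epsilon> * b2 * a2" and "v / u * (b1 * b1 - \<epsilon> * b2 * b2) + (a1 * a1 - \<epsilon> * a2 * a2) = 1"
    and "val_ge \<nu> a1 0" "val_ge \<nu> a2 0" "val_ge \<nu> b1 0" "val_ge \<nu> b2 0"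
proof -
  obtain a1 a2 b1 b2 c1 c2 d1 d2 where t: "t = M2 (a1, a2) (b1, b2) (c1, c2) (d1, d2)"
    by (metis m2.exhaust prod.exhaust)
  have K: "M2 (a1, a2) (b1, b2) (c1, c2) (d1, d2) \<in> Kmax \<nu> \<epsilon>"
    and commute: "mmul \<epsilon> (M2 (a1, a2) (b1, b2) (c1, c2) (d1, d2)) (M2 (esqrt z) (esqrt u) (esqrt v) (esqrt z))
      = mmul \<epsilon> (M2 (esqrt z) (esqrt u) (esqrt v) (esqrt z)) (M2 (a1, a2) (b1, b2) (c1, c2) (d1, d2))"
    using assms(2) unfolding t centralizerK_def by simp_all
  have "d1 = a1" "d2 = a2" "c1 = v / u * b1" "c2 = v / u * b2"
    using commute unfolding mmul_commute_iff[OF eps_nonzero assms(1)] by simp_all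
  then show ?thesis
    using that K unfolding t Kmax_iff UG_iff[OF two_nonzero] by (auto simp: algebra_simps)
qed

lemma ZU_elementE:
  assumes "g \<in> setmul \<epsilon> (center \<epsilon>) (Ugrp \<nu> \<epsilon>)"
  obtains x y b where "g = mmul \<epsilon> (scalar_m2 (x, y)) (upper_unip b)"
    and "scalar_m2 (x, y) \<in> center \<epsilon>" and "val_ge \<nu> b 0"
proof -
  obtain l n where "g = mmul \<epsilon> l n" "l \<in> center \<epsilon>" "n \<in> Ugrp \<nu> \<epsilon>"
    using assms unfolding setmul_def by blast
  moreover obtain x y where "l = scalar_m2 (x, y)"
    using \<open>l \<in> center \<epsilon>\<close> center_iff[OF two_nonzero] by blast
  moreover obtain b where "n = upper_unip b" "val_ge \<nu> b 0"
    using \<open>n \<in> Ugrp \<nu> \<epsilon>\<close> Ugrp_iff by blast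
  ultimately show ?thesis
    using that by blast
qed

lemma centralizerK_nilpotent_eq_ZU:
  assumes "u \<noteq> 0"
  shows "centralizerK \<nu> \<epsilon> (M2 e0 (esqrt u) e0 e0) = setmul \<epsilon> (center \<epsilon>) (Ugrp \<nu> \<epsilon>)"
proof (intro equalityI subsetI)
  fix k
  assume "k \<in> centralizerK \<nu> \<epsilon> (M2 e0 (esqrt u) e0 e0)"
  moreover have "M2 e0 (esqrt u) e0 e0 = M2 (esqrt 0) (esqrt u) (esqrt 0) (esqrt 0)"
    by (simp add: E_defs)
  ultimately obtain a1 a2 b1 b2 where k: "k = M2 (a1, a2) (b1, b2) (0 / u * b1, 0 / u * b2) (a1, a2)"
    and ug: "b1 * a1 = \<epsilon> * b2 * a2" "0 / u * (b1 * b1 - \<epsilon> * b2 * b2) + (a1 * a1 - \<epsilon> * a2 * a2) = 1"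
    and integral: "val_ge \<nu> a1 0" "val_ge \<nu> a2 0" "val_ge \<nu> b1 0" "val_ge \<nu> b2 0"
    using centralizerK_elementE[OF assms] by metis
  then have norm: "1 * 1 = a1 * a1 - \<epsilon> * a2 * a2"
    by simp
  define \<beta> where "\<beta> = (a1 * b2 - a2 * b1) / 1"
  have "k = mmul \<epsilon> (scalar_m2 (a1, a2)) (upper_unip \<beta>)"
    using centralizer_element_factor(3)[OF one_neq_zero norm ug(1), of 0] unfolding k \<beta>_def
    by (simp add: E_defs)
  moreover have "scalar_m2 (a1, a2) \<in> center \<epsilon>"
    using norm center_iff[OF two_nonzero] by auto
  moreover have "upper_unip \<beta> \<in> Ugrp \<nu> \<epsilon>"
    using integral Ugrp_iff unfolding \<beta>_def by auto
  ultimately show "k \<in> setmul \<epsilon> (center \<epsilon>) (Ugrp \<nu> \<epsilon>)"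
    unfolding setmul_def by blast
next
  fix g
  assume "g \<in> setmul \<epsilon> (center \<epsilon>) (Ugrp \<nu> \<epsilon>)"
  then obtain x y b where g: "g = mmul \<epsilon> (scalar_m2 (x, y)) (upper_unip b)"
    and l: "scalar_m2 (x, y) \<in> center \<epsilon>" and b: "val_ge \<nu> b 0"
    by (rule ZU_elementE)
  have "mmul \<epsilon> g (M2 e0 (esqrt u) e0 e0) = mmul \<epsilon> (M2 e0 (esqrt u) e0 e0) g"
    unfolding g by (simp add: E_defs algebra_simps)
  moreover have "g \<in> Kmax \<nu> \<epsilon>"
    using l b Ugrp_iff center_subset_Kmax Kmax_mult unfolding g Ugrp_def by blast
  ultimately show "g \<in> centralizerK \<nu> \<epsilon> (M2 e0 (esqrt u) e0 e0)"
    by (simp add: centralizerK_def)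
qed

end

section \<open>The subgroups J_d and the centralizer of X\<close>

lemma ceiling_half: "\<lceil>real_of_int d / 2\<rceil> = (d + 1) div 2"
proof -
  consider k where "d = 2 * k" | k where "d = 2 * k + 1"
    by (metis oddE evenE)
  then show ?thesis
  proof cases
    case (1 k)
    then show ?thesis
      by simp
  next
    case (2 k)
    then have "\<lceil>real_of_int d / 2\<rceil> = k + 1"
      by (intro ceiling_unique) simp_all
    then show ?thesis
      using 2 by simp
  qed
qed

locale U11_depth = unramified_quadratic +
  fixes d :: int
  assumes d_nonneg: "0 \<le> d"
begin

definition "level = \<lceil>real_of_int d / 2\<rceil>"
definition "level' = \<lceil>real_of_int (d + 1) / 2\<rceil>"

lemma level_bounds: "0 \<le> level" "level \<le> level'" "1 \<le> level'" "level + level' = d + 1"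
  unfolding level_def level'_def ceiling_half using d_nonneg by simp_all

lemma Jgrp_iff: "M2 (a1, a2) (b1, b2) (c1, c2) (d1, d2) \<in> Jgrp \<nu> \<epsilon> d \<longleftrightarrow>
   M2 (a1, a2) (b1, b2) (c1, c2) (d1, d2) \<in> UG \<epsilon> \<and>
   val_ge \<nu> (a1 - 1) level \<and> val_ge \<nu> a2 level \<and> val_ge \<nu> b1 level \<and> val_ge \<nu> b2 level \<and>
   val_ge \<nu> c1 level' \<and> val_ge \<nu> c2 level' \<and> val_ge \<nu> (d1 - 1) level \<and> val_ge \<nu> d2 level"
  unfolding Jgrp_def level_def level'_def by (auto simp: pE_def E_defs)

lemma Jgrp_real_entriesI:
  assumes "x * w - \<epsilon> * g * b = 1"
    and "val_ge \<nu> (x - 1) level" "val_ge \<nu> (w - 1) level" "val_ge \<nu> b level" "val_ge \<nu> g level'"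
  shows "M2 (x, 0) (0, b) (0, g) (w, 0) \<in> Jgrp \<nu> \<epsilon> d"
  using assms by (simp add: Jgrp_iff UG_iff)

lemma Jgrp_mult:
  assumes "j \<in> Jgrp \<nu> \<epsilon> d" "j' \<in> Jgrp \<nu> \<epsilon> d"
  shows "mmul \<epsilon> j j' \<in> Jgrp \<nu> \<epsilon> d"
proof -
  obtain a1 a2 b1 b2 c1 c2 d1 d2 where j: "j = M2 (a1, a2) (b1, b2) (c1, c2) (d1, d2)"
    by (metis m2.exhaust prod.exhaust)
  obtain A1 A2 B1 B2 C1 C2 D1 D2 where j': "j' = M2 (A1, A2) (B1, B2) (C1, C2) (D1, D2)"
    by (metis m2.exhaust prod.exhaust)
  have UG: "mmul \<epsilon> j j' \<in> UG \<epsilon>"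
    using assms UG_mult by (auto simp: Jgrp_def)
  have lv: "val_ge \<nu> (a1 - 1) level" "val_ge \<nu> a2 level" "val_ge \<nu> b1 level" "val_ge \<nu> b2 level"
    "val_ge \<nu> c1 level'" "val_ge \<nu> c2 level'" "val_ge \<nu> (d1 - 1) level" "val_ge \<nu> d2 level"
    "val_ge \<nu> (A1 - 1) level" "val_ge \<nu> A2 level" "val_ge \<nu> B1 level" "val_ge \<nu> B2 level"
    "val_ge \<nu> C1 level'" "val_ge \<nu> C2 level'" "val_ge \<nu> (D1 - 1) level" "val_ge \<nu> D2 level"
    using assms unfolding j j' Jgrp_iff by auto
  have to_level: "val_ge \<nu> x level" if "val_ge \<nu> x level'" for x
    using val_ge_mono[OF that] level_bounds by simp
  have integral: "val_ge \<nu> x 0" if "val_ge \<nu> x level" for x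
    using val_ge_mono[OF that] level_bounds by simp
  have unit: "val_ge \<nu> x 0" if "val_ge \<nu> (x - 1) level" for x
    using val_ge_0_if_near_one[OF that] level_bounds by simp
  note at_level = lv(1-4,7-12,15,16) to_level[OF lv(5)] to_level[OF lv(6)] to_level[OF lv(13)] to_level[OF lv(14)]
  note integrals = at_level[THEN integral] unit[OF lv(1)] unit[OF lv(7)] unit[OF lv(9)] unit[OF lv(15)]
  note facts = lv at_level integrals val_ge_eps
  have near_one: "x * y - 1 = (x - 1) * (y - 1) + (x - 1) + (y - 1)" for x y :: 'a
    by (simp add: algebra_simps)
  have "val_ge \<nu> ((a1 - 1) * (A1 - 1) + (a1 - 1) + (A1 - 1) + \<epsilon> * a2 * A2 + (b1 * C1 + \<epsilon> * b2 * C2)) level"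
    using facts by blast
  then have a: "val_ge \<nu> (a1 * A1 + \<epsilon> * a2 * A2 + (b1 * C1 + \<epsilon> * b2 * C2) - 1) level"
    by (simp add: near_one[of a1 A1, symmetric] algebra_simps)
  have "val_ge \<nu> ((d1 - 1) * (D1 - 1) + (d1 - 1) + (D1 - 1) + c1 * B1 + \<epsilon> * c2 * B2 + \<epsilon> * d2 * D2) level"
    using facts by blast
  then have d: "val_ge \<nu> (c1 * B1 + \<epsilon> * c2 * B2 + (d1 * D1 + \<epsilon> * d2 * D2) - 1) level"
    by (simp add: near_one[of d1 D1, symmetric] algebra_simps)
  have "val_ge \<nu> (a1 * A2 + a2 * A1 + (b1 * C2 + b2 * C1)) level"
    "val_ge \<nu> (a1 * B1 + \<epsilon> * a2 * B2 + (b1 * D1 + \<epsilon> * b2 * D2)) level"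
    "val_ge \<nu> (a1 * B2 + a2 * B1 + (b1 * D2 + b2 * D1)) level"
    "val_ge \<nu> (c1 * A1 + \<epsilon> * c2 * A2 + (d1 * C1 + \<epsilon> * d2 * C2)) level'"
    "val_ge \<nu> (c1 * A2 + c2 * A1 + (d1 * C2 + d2 * C1)) level'"
    "val_ge \<nu> (c1 * B2 + c2 * B1 + (d1 * D2 + d2 * D1)) level"
    using facts by blast+
  then show ?thesis
    using UG a d unfolding j j' by (simp add: E_defs Jgrp_iff)
qed

lemma Jgrp_correction_factors:
  assumes "s * s - \<epsilon> * \<beta> * \<gamma> = 1"
    and s: "val_ge \<nu> (s - 1) level'" and \<beta>: "val_ge \<nu> \<beta> 0" and \<gamma>: "val_ge \<nu> \<gamma> level'"
  shows "M2 (s - \<epsilon> * \<beta> * \<gamma>, 0) (0, \<beta> - \<beta> * s) (0, \<gamma>) (s, 0) \<in> Jgrp \<nu> \<epsilon> d"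
    and "M2 (s, 0) (0, \<beta> * s - \<beta>) (0, - \<gamma>) (s - \<epsilon> * \<beta> * \<gamma>, 0) \<in> Jgrp \<nu> \<epsilon> d"
proof -
  have "val_ge \<nu> ((s - 1) - \<epsilon> * \<beta> * \<gamma>) level'" "val_ge \<nu> (\<beta> * (s - 1)) level'"
    using s \<beta> \<gamma> by (blast intro: val_ge_eps)+
  then have "val_ge \<nu> (s - \<epsilon> * \<beta> * \<gamma> - 1) level" "val_ge \<nu> (\<beta> * s - \<beta>) level"
    "val_ge \<nu> (s - 1) level"
    using val_ge_mono level_bounds(2) s by (auto simp: algebra_simps)
  moreover have "val_ge \<nu> (\<beta> - \<beta> * s) level"
    using calculation(2) val_ge_uminus[of "\<beta> * s - \<beta>"] by simp
  ultimately show "M2 (s - \<epsilon> * \<beta> * \<gamma>, 0) (0, \<beta> - \<beta> * s) (0, \<gamma>) (s, 0) \<in> Jgrp \<nu> \<epsilon> d"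
    and "M2 (s, 0) (0, \<beta> * s - \<beta>) (0, - \<gamma>) (s - \<epsilon> * \<beta> * \<gamma>, 0) \<in> Jgrp \<nu> \<epsilon> d"
    using assms(1) \<gamma> by (auto intro!: Jgrp_real_entriesI simp: algebra_simps)
qed

end

lemma add_char_invariant_pE1:
  assumes "add_char_cond \<nu> \<psi>" "w \<in> pE \<nu> 1"
  shows "\<psi> (eadd t w) = \<psi> t"
proof -
  have "\<psi> (eadd t w) = \<psi> t * \<psi> w" "\<psi> w = 1"
    using assms unfolding add_char_cond_def by blast+
  then show ?thesis
    by simp
qed

context U11_depth
begin

lemma PsiC_eq_on_Jgrp:
  assumes \<psi>: "add_char_cond \<nu> \<psi>"
    and z: "val_gt \<nu> z (- level)" and v: "val_gt \<nu> v (- level)"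
    and k: "k \<in> Jgrp \<nu> \<epsilon> d"
  shows "PsiC \<psi> \<epsilon> (M2 (esqrt z) (esqrt u) (esqrt v) (esqrt z)) k = PsiC \<psi> \<epsilon> (M2 e0 (esqrt u) e0 e0) k"
proof -
  obtain a1 a2 b1 b2 c1 c2 d1 d2 where k_eq: "k = M2 (a1, a2) (b1, b2) (c1, c2) (d1, d2)"
    by (metis m2.exhaust prod.exhaust)
  have lv: "val_ge \<nu> (a1 - 1) level" "val_ge \<nu> a2 level" "val_ge \<nu> b1 level" "val_ge \<nu> b2 level"
    "val_ge \<nu> (d1 - 1) level" "val_ge \<nu> d2 level"
    using k unfolding k_eq Jgrp_iff by auto
  have "val_ge \<nu> (z * x) 1" "val_ge \<nu> (v * x) 1" if "val_ge \<nu> x level" for x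
    using z v val_ge_mult[OF _ that] by (simp_all add: val_gt_iff_val_ge)
  note small = this[OF lv(1)] this[OF lv(2)] this[OF lv(3)] this[OF lv(4)] this[OF lv(5)] this[OF lv(6)]
  define w where "w = (\<epsilon> * (z * a2) + \<epsilon> * (v * b2) + \<epsilon> * (z * d2), z * (a1 - 1) + v * b1 + z * (d1 - 1))"
  have "w \<in> pE \<nu> 1"
    unfolding w_def pE_def using small by simp (blast intro: val_ge_eps)
  moreover have "mtrace (mmul \<epsilon> (M2 (esqrt z) (esqrt u) (esqrt v) (esqrt z)) (msub k mI))
      = eadd (mtrace (mmul \<epsilon> (M2 e0 (esqrt u) e0 e0) (msub k mI))) w"
    unfolding k_eq w_def mI_def by (simp add: E_defs algebra_simps)
  ultimately show ?thesis
    unfolding PsiC_def using add_char_invariant_pE1[OF \<psi>] by simp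
qed

lemma val_ge_ratio:
  assumes "u \<noteq> 0" "\<nu> u = - d" "val_gt \<nu> v (- level)"
  shows "val_ge \<nu> (v / u) level'"
proof -
  have "val_ge \<nu> (v / u) (- level + 1 - \<nu> u)"
    using val_ge_divide[of v "- level + 1" u] assms(1,3) by (simp add: val_gt_iff_val_ge)
  moreover have "level' \<le> - level + 1 - \<nu> u"
    using level_bounds(4) assms(2) by linarith
  ultimately show ?thesis
    by (rule val_ge_mono)
qed

lemma centralizerK_subset_ZU_Jgrp:
  assumes u: "u \<noteq> 0" "\<nu> u = - d" and v: "val_gt \<nu> v (- level)"
  shows "centralizerK \<nu> \<epsilon> (M2 (esqrt z) (esqrt u) (esqrt v) (esqrt z))
    \<subseteq> setmul \<epsilon> (setmul \<epsilon> (center \<epsilon>) (Ugrp \<nu> \<epsilon>)) (Jgrp \<nu> \<epsilon> d)"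
proof
  fix t
  assume "t \<in> centralizerK \<nu> \<epsilon> (M2 (esqrt z) (esqrt u) (esqrt v) (esqrt z))"
  then obtain a1 a2 b1 b2 where t: "t = M2 (a1, a2) (b1, b2) (v / u * b1, v / u * b2) (a1, a2)"
    and ug: "b1 * a1 = \<epsilon> * b2 * a2" "v / u * (b1 * b1 - \<epsilon> * b2 * b2) + (a1 * a1 - \<epsilon> * a2 * a2) = 1"
    and integral: "val_ge \<nu> a1 0" "val_ge \<nu> a2 0" "val_ge \<nu> b1 0" "val_ge \<nu> b2 0"
    using centralizerK_elementE[OF u(1)] by metis
  define r where "r = v / u"
  have r: "val_ge \<nu> r level'"
    unfolding r_def using val_ge_ratio[OF u v] .
  have "val_ge \<nu> (- (r * (b1 * b1 - \<epsilon> * b2 * b2))) level'"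
    using r integral by simp (blast intro: val_ge_eps)
  moreover have "(a1 * a1 - \<epsilon> * a2 * a2) - 1 = - (r * (b1 * b1 - \<epsilon> * b2 * b2))"
    using ug(2) unfolding r_def by (simp add: algebra_simps)
  ultimately obtain s where s: "s * s = a1 * a1 - \<epsilon> * a2 * a2" "val_ge \<nu> (s - 1) level'"
    using sqrt_near_one level_bounds(3) by metis
  then have s_unit: "s \<noteq> 0" "\<nu> s = 0"
    using val_eq_0_if_near_one val_ge_mono[OF s(2) level_bounds(3)] by auto
  define \<beta> where "\<beta> = (a1 * b2 - a2 * b1) / s"
  note factor = centralizer_element_factor[OF s_unit(1) s(1) ug(1), folded \<beta>_def]
  have \<beta>: "val_ge \<nu> \<beta> 0"
    using integral val_ge_divide[of "a1 * b2 - a2 * b1" 0 s] s_unit unfolding \<beta>_def by auto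
  have "scalar_m2 (a1 / s, a2 / s) \<in> center \<epsilon>"
    using factor(1) center_iff[OF two_nonzero] by blast
  moreover have "upper_unip \<beta> \<in> Ugrp \<nu> \<epsilon>"
    using \<beta> Ugrp_iff by auto
  moreover have "s * s - \<epsilon> * \<beta> * (r * \<beta>) = 1"
    using ug(2) s(1) unfolding factor(2) r_def by (simp add: algebra_simps)
  then have "M2 (s - \<epsilon> * \<beta> * (r * \<beta>), 0) (0, \<beta> - \<beta> * s) (0, r * \<beta>) (s, 0) \<in> Jgrp \<nu> \<epsilon> d"
    using s(2) \<beta> r by (intro Jgrp_correction_factors(1)) blast+
  ultimately show "t \<in> setmul \<epsilon> (setmul \<epsilon> (center \<epsilon>) (Ugrp \<nu> \<epsilon>)) (Jgrp \<nu> \<epsilon> d)"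
    unfolding t factor(3)[of r, unfolded r_def] setmul_def r_def by blast
qed

lemma ZU_subset_centralizerK_Jgrp:
  assumes u: "u \<noteq> 0" "\<nu> u = - d" and v: "val_gt \<nu> v (- level)"
  shows "setmul \<epsilon> (center \<epsilon>) (Ugrp \<nu> \<epsilon>)
    \<subseteq> setmul \<epsilon> (centralizerK \<nu> \<epsilon> (M2 (esqrt z) (esqrt u) (esqrt v) (esqrt z))) (Jgrp \<nu> \<epsilon> d)"
proof
  fix g
  assume "g \<in> setmul \<epsilon> (center \<epsilon>) (Ugrp \<nu> \<epsilon>)"
  then obtain x y b where g: "g = mmul \<epsilon> (scalar_m2 (x, y)) (upper_unip b)"
    and l: "scalar_m2 (x, y) \<in> center \<epsilon>" and b: "val_ge \<nu> b 0"
    by (rule ZU_elementE)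
  define \<gamma> where "\<gamma> = v / u * b"
  have \<gamma>: "val_ge \<nu> \<gamma> level'"
    unfolding \<gamma>_def using val_ge_ratio[OF u v] b by blast
  then have "val_ge \<nu> ((1 + \<epsilon> * b * \<gamma>) - 1) level'"
    using b by simp (blast intro: val_ge_eps)
  then obtain s where s: "s * s = 1 + \<epsilon> * b * \<gamma>" "val_ge \<nu> (s - 1) level'"
    using sqrt_near_one level_bounds(3) by metis
  define t where "t = M2 (s, 0) (0, b) (0, \<gamma>) (s, 0)"
  define j where "j = M2 (s, 0) (0, b * s - b) (0, - \<gamma>) (s - \<epsilon> * b * \<gamma>, 0)"
  have "val_ge \<nu> s 0" "val_ge \<nu> \<gamma> 0"
    using val_ge_0_if_near_one[OF s(2)] val_ge_mono[OF \<gamma>] level_bounds(3) by simp_all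
  then have "t \<in> Kmax \<nu> \<epsilon>"
    unfolding t_def Kmax_iff UG_iff[OF two_nonzero] using s(1) b by (simp add: algebra_simps)
  then have "mmul \<epsilon> (scalar_m2 (x, y)) t \<in> Kmax \<nu> \<epsilon>"
    using l center_subset_Kmax Kmax_mult by blast
  moreover have "mmul \<epsilon> (mmul \<epsilon> (scalar_m2 (x, y)) t) (M2 (esqrt z) (esqrt u) (esqrt v) (esqrt z))
      = mmul \<epsilon> (M2 (esqrt z) (esqrt u) (esqrt v) (esqrt z)) (mmul \<epsilon> (scalar_m2 (x, y)) t)"
    unfolding t_def mmul_commute_iff[OF eps_nonzero u(1)] \<gamma>_def using u(1) by (simp add: E_defs)
  ultimately have "mmul \<epsilon> (scalar_m2 (x, y)) t \<in> centralizerK \<nu> \<epsilon> (M2 (esqrt z) (esqrt u) (esqrt v) (esqrt z))"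
    by (simp add: centralizerK_def)
  moreover have "j \<in> Jgrp \<nu> \<epsilon> d"
    unfolding j_def using s b \<gamma> by (intro Jgrp_correction_factors(2)) auto
  moreover have "g = mmul \<epsilon> (mmul \<epsilon> (scalar_m2 (x, y)) t) j"
  proof -
    have "mmul \<epsilon> t j = upper_unip b"
      unfolding t_def j_def using s(1) by (simp add: E_defs algebra_simps)
    then show ?thesis
      unfolding g by (simp add: mmul_assoc)
  qed
  ultimately show "g \<in> setmul \<epsilon> (centralizerK \<nu> \<epsilon> (M2 (esqrt z) (esqrt u) (esqrt v) (esqrt z))) (Jgrp \<nu> \<epsilon> d)"
    unfolding setmul_def by blast
qed

end

theorem lemma5p9:
  fixes \<nu> :: "'a::field \<Rightarrow> int" and \<epsilon> :: 'a and \<psi> :: "'a \<times> 'a \<Rightarrow> complex"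
    and d :: int and z u v :: 'a
  assumes "nonarch_local_field \<nu>" and "residue_char_not_2 \<nu>"
    and "\<epsilon> \<noteq> 0" and "\<nu> \<epsilon> = 0" and "\<not> (\<exists>y. y * y = \<epsilon>)"
    and "add_char_cond \<nu> \<psi>"
    and "d > 0"
    and "M2 (esqrt z) (esqrt u) (esqrt v) (esqrt z) \<in> kLie \<nu> \<epsilon> d"
    and "val_gt \<nu> z (- \<lceil>real_of_int d / 2\<rceil>)" and "val_gt \<nu> v (- \<lceil>real_of_int d / 2\<rceil>)"
    and "u \<noteq> 0" and "\<nu> u = - d"
  shows "(\<forall>k \<in> Jgrp \<nu> \<epsilon> d.
            PsiC \<psi> \<epsilon> (M2 (esqrt z) (esqrt u) (esqrt v) (esqrt z)) k
          = PsiC \<psi> \<epsilon> (M2 e0 (esqrt u) e0 e0) k)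
       \<and> setmul \<epsilon> (centralizerK \<nu> \<epsilon> (M2 (esqrt z) (esqrt u) (esqrt v) (esqrt z))) (Jgrp \<nu> \<epsilon> d)
         = setmul \<epsilon> (centralizerK \<nu> \<epsilon> (M2 e0 (esqrt u) e0 e0)) (Jgrp \<nu> \<epsilon> d)
       \<and> setmul \<epsilon> (centralizerK \<nu> \<epsilon> (M2 e0 (esqrt u) e0 e0)) (Jgrp \<nu> \<epsilon> d)
         = setmul \<epsilon> (setmul \<epsilon> (center \<epsilon>) (Ugrp \<nu> \<epsilon>)) (Jgrp \<nu> \<epsilon> d)"
proof -
  interpret U11_depth \<nu> \<epsilon> d
    using assms by unfold_locales auto
  have z: "val_gt \<nu> z (- level)" and v: "val_gt \<nu> v (- level)"
    using assms(9,10) by (simp_all add: level_def)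
  note u = assms(11,12)
  have "setmul \<epsilon> (centralizerK \<nu> \<epsilon> (M2 (esqrt z) (esqrt u) (esqrt v) (esqrt z))) (Jgrp \<nu> \<epsilon> d)
      = setmul \<epsilon> (setmul \<epsilon> (center \<epsilon>) (Ugrp \<nu> \<epsilon>)) (Jgrp \<nu> \<epsilon> d)"
    using Jgrp_mult centralizerK_subset_ZU_Jgrp[OF u v] ZU_subset_centralizerK_Jgrp[OF u v] by (rule setmul_eq_if_covered)
  then show ?thesis
    using PsiC_eq_on_Jgrp[OF assms(6) z v] centralizerK_nilpotent_eq_ZU[OF u(1)] by simp
qed

end
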